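(* Let $(X,s)$ be a complete strong partial metric space, let $x_o\in X$, and let $f:X\to X$ be a Cauchy function at $x_o$. If $f$ is weakly orbitally continuous at $x_o$, then $f$ has a fixed point.
   Context: A strong partial metric on $X$ is $s:X\times X\to\mathbb{R}$ with, for all $x,y,z$: $s(x,x)<s(x,y)$ whenever $x\neq y$; $s(x,y)=s(y,x)$; $s(x,y)\le s(x,z)+s(z,y)-s(z,z)$. A point $a$ is a limit of $\{x_i\}$ iff for every $\epsilon>0$ there is $N$ with $s(a,x_i)-s(a,a)<\epsilon$ for all $i>N$ (convergence in the topology generated by the balls $\{y\mid s(x,y)-s(x,x)<\epsilon\}$). $\{x_i\}$ is Cauchy with central distance $r$ if for every $\epsilon>0$ there is $N$ with $|s(x_i,x_j)-r|<\epsilon$ for $i\ge j>N$; a special limit is a limit $a$ with $s(a,a)=r$; $(X,s)$ is complete if every Cauchy sequence has a special limit. $f$ is a Cauchy function at $x_o$ if the orbit $\{f^i(x_o)\}$ ($f^0(x_o)=x_o$, $f^{i+1}(x_o)=f(f^i(x_o))$) is Cauchy. $f$ is weakly orbitally continuous at $x_o$ if whenever $a$ is a special limit of $\{f^i(x_o)\}$, $f(a)$ is a limit of $\{f^i(x_o)\}$. *)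

theory Defs
  imports Main "HOL.Real"
begin

definition strong_partial_metric :: "('a \<Rightarrow> 'a \<Rightarrow> real) \<Rightarrow> bool" where
  "strong_partial_metric s \<longleftrightarrow>
     (\<forall>x y. x \<noteq> y \<longrightarrow> s x x < s x y) \<and>
     (\<forall>x y. s x y = s y x) \<and>
     (\<forall>x y z. s x y \<le> s x z + s z y - s z z)"

definition spm_limit :: "('a \<Rightarrow> 'a \<Rightarrow> real) \<Rightarrow> (nat \<Rightarrow> 'a) \<Rightarrow> 'a \<Rightarrow> bool" where
  "spm_limit s x a \<longleftrightarrow>
     (\<forall>\<epsilon>>0. \<exists>N. \<forall>i>N. s a (x i) - s a a < \<epsilon>)"

definition spm_cauchy :: "('a \<Rightarrow> 'a \<Rightarrow> real) \<Rightarrow> (nat \<Rightarrow> 'a) \<Rightarrow> real \<Rightarrow> bool" where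
  "spm_cauchy s x r \<longleftrightarrow>
     (\<forall>\<epsilon>>0. \<exists>N. \<forall>i j. i \<ge> j \<and> j > N \<longrightarrow> \<bar>s (x i) (x j) - r\<bar> < \<epsilon>)"

definition spm_special_limit :: "('a \<Rightarrow> 'a \<Rightarrow> real) \<Rightarrow> (nat \<Rightarrow> 'a) \<Rightarrow> real \<Rightarrow> 'a \<Rightarrow> bool" where
  "spm_special_limit s x r a \<longleftrightarrow> spm_limit s x a \<and> s a a = r"

definition spm_complete :: "('a \<Rightarrow> 'a \<Rightarrow> real) \<Rightarrow> bool" where
  "spm_complete s \<longleftrightarrow>
     (\<forall>x r. spm_cauchy s x r \<longrightarrow> (\<exists>a. spm_special_limit s x r a))"

definition orbit :: "('a \<Rightarrow> 'a) \<Rightarrow> 'a \<Rightarrow> nat \<Rightarrow> 'a" where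
  "orbit f x0 i = (f ^^ i) x0"

definition cauchy_function_at :: "('a \<Rightarrow> 'a \<Rightarrow> real) \<Rightarrow> ('a \<Rightarrow> 'a) \<Rightarrow> 'a \<Rightarrow> bool" where
  "cauchy_function_at s f x0 \<longleftrightarrow> (\<exists>r. spm_cauchy s (orbit f x0) r)"

definition weakly_orbitally_continuous_at :: "('a \<Rightarrow> 'a \<Rightarrow> real) \<Rightarrow> ('a \<Rightarrow> 'a) \<Rightarrow> 'a \<Rightarrow> bool" where
  "weakly_orbitally_continuous_at s f x0 \<longleftrightarrow>
     (\<forall>r a. spm_cauchy s (orbit f x0) r \<and> spm_special_limit s (orbit f x0) r a
        \<longrightarrow> spm_limit s (orbit f x0) (f a))"

end

theory Submission
  imports Defs
begin

text \<open>A special limit \<open>a\<close> of a Cauchy orbit is the only candidate limit: for any other limit \<open>b\<close>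
  and any late index \<open>i\<close>, the triangle inequality through \<open>x i\<close> gives
  \<open>s a b \<le> s a (x i) + s (x i) b - s (x i) (x i)\<close>, where the three terms tend to \<open>s a a = r\<close>,
  \<open>s b b\<close> and \<open>r\<close>. Hence \<open>s a b \<le> s b b\<close>, which strong partial metrics only allow for \<open>b = a\<close>.
  Completeness supplies a special limit of the orbit and weak orbital continuity makes
  its image a limit too, so it is a fixed point.\<close>

lemma spm_special_limit_le:
  assumes "strong_partial_metric s" and "spm_cauchy s x r"
    and "spm_special_limit s x r a" and "spm_limit s x b"
  shows "s a b \<le> s b b"
proof (rule field_le_epsilon)
  fix e :: real
  assume "e > 0"
  then have e3: "e / 3 > 0" by simp
  obtain N1 where N1: "\<forall>i>N1. s a (x i) - s a a < e / 3"
    using assms(3) e3 unfolding spm_special_limit_def spm_limit_def by blast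
  obtain N2 where N2: "\<forall>i>N2. s b (x i) - s b b < e / 3"
    using assms(4) e3 unfolding spm_limit_def by blast
  obtain N3 where N3: "\<forall>i j. i \<ge> j \<and> j > N3 \<longrightarrow> \<bar>s (x i) (x j) - r\<bar> < e / 3"
    using assms(2) e3 unfolding spm_cauchy_def by blast
  define i where "i = N1 + N2 + N3 + 1"
  have "s a (x i) - s a a < e / 3" and "s b (x i) - s b b < e / 3"
    and "\<bar>s (x i) (x i) - r\<bar> < e / 3"
    using N1 N2 N3 unfolding i_def by auto
  moreover have "s a b \<le> s a (x i) + s (x i) b - s (x i) (x i)"
    and "s (x i) b = s b (x i)"
    using assms(1) unfolding strong_partial_metric_def by blast+
  moreover have "s a a = r"
    using assms(3) unfolding spm_special_limit_def by blast
  ultimately show "s a b \<le> s b b + e" by linarith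
qed

lemma spm_limit_eq_special_limit:
  assumes "strong_partial_metric s" and "spm_cauchy s x r"
    and "spm_special_limit s x r a" and "spm_limit s x b"
  shows "b = a"
proof (rule ccontr)
  assume "b \<noteq> a"
  with assms(1) have "s b b < s a b"
    unfolding strong_partial_metric_def by metis
  with spm_special_limit_le[OF assms] show False by linarith
qed

theorem theorem7p13:
  fixes s :: "'a \<Rightarrow> 'a \<Rightarrow> real" and f :: "'a \<Rightarrow> 'a" and x0 :: 'a
  assumes "strong_partial_metric s"
    and "spm_complete s"
    and "cauchy_function_at s f x0"
    and "weakly_orbitally_continuous_at s f x0"
  shows "\<exists>a. f a = a"
proof -
  obtain r where cauchy: "spm_cauchy s (orbit f x0) r"
    using assms(3) unfolding cauchy_function_at_def by blast
  then obtain a where special: "spm_special_limit s (orbit f x0) r a"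
    using assms(2) unfolding spm_complete_def by blast
  have "spm_limit s (orbit f x0) (f a)"
    using assms(4) cauchy special unfolding weakly_orbitally_continuous_at_def by blast
  then have "f a = a"
    using spm_limit_eq_special_limit[OF assms(1) cauchy special] by blast
  then show ?thesis by blast
qed

end
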